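(* Let $n=2$, $E=\{p\in\Delta_2:p_1,p_2\in\mathbb Q\}$, and $\Theta=(\overline{\Delta}_2)^E$ with the topology of pointwise convergence. Let $\nu_0$ be the infinite product of the uniform distribution on $\overline{\Delta}_2$. Let $\delta>0$ be rational and define $\mu(0)=(\frac12,\frac12)$, $\mu(t+1)=\left(\frac{\mu_1(t)}{1+\delta\mu_2(t)},\frac{(1+\delta)\mu_2(t)}{1+\delta\mu_2(t)}\right)$. Then the wealth distributions $\{\nu_t\}_{t\ge0}$ satisfy the large deviation principle on $\Theta$ with the trivial rate function $I\equiv0$.
   Context: $\Delta_2$, $\overline{\Delta}_2$ the open and closed unit simplices in $\mathbb R^2$. Relative value of $\pi:E\to\overline{\Delta}_2$: $V_\pi(0)=1$, $V_\pi(t+1)=V_\pi(t)\sum_{i=1}^2\pi_i(\mu(t))\mu_i(t+1)/\mu_i(t)$. Wealth distribution: $\nu_t(B)=\frac{1}{\widehat V(t)}\int_BV_\pi(t)\,d\nu_0(\pi)$ with $\widehat V(t)=\int_\Theta V_\pi(t)\,d\nu_0(\pi)$. LDP with rate $I$: for closed $F$, $\limsup_t\frac1t\log\nu_t(F)\le-\inf_FI$; for open $G$, $\liminf_t\frac1t\log\nu_t(G)\ge-\inf_GI$. *)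

theory Defs
  imports "HOL-Probability.Probability"
begin

definition simplex_closed :: "(real \<times> real) set" where
  "simplex_closed = {p. fst p \<ge> 0 \<and> snd p \<ge> 0 \<and> fst p + snd p = 1}"

definition simplex_open :: "(real \<times> real) set" where
  "simplex_open = {p. fst p > 0 \<and> snd p > 0 \<and> fst p + snd p = 1}"

definition E_rat :: "(real \<times> real) set" where
  "E_rat = {p \<in> simplex_open. fst p \<in> \<rat> \<and> snd p \<in> \<rat>}"

definition unif_simplex :: "(real \<times> real) measure" where
  "unif_simplex = distr (restrict_space lborel {0..1::real})
                        (restrict_space borel simplex_closed) (\<lambda>x. (x, 1 - x))"

definition Theta_top :: "((real \<times> real) \<Rightarrow> (real \<times> real)) topology" where
  "Theta_top = product_topology (\<lambda>_. subtopology euclidean simplex_closed) E_rat"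

definition nu0 :: "((real \<times> real) \<Rightarrow> (real \<times> real)) measure" where
  "nu0 = PiM E_rat (\<lambda>_. unif_simplex)"

fun mkt :: "real \<Rightarrow> nat \<Rightarrow> real \<times> real" where
  "mkt \<delta> 0 = (1/2, 1/2)"
| "mkt \<delta> (Suc t) = (let m = mkt \<delta> t in
      (fst m / (1 + \<delta> * snd m), (1 + \<delta>) * snd m / (1 + \<delta> * snd m)))"

fun relval :: "(nat \<Rightarrow> real \<times> real) \<Rightarrow> ((real \<times> real) \<Rightarrow> (real \<times> real)) \<Rightarrow> nat \<Rightarrow> real" where
  "relval \<mu> \<pi> 0 = 1"
| "relval \<mu> \<pi> (Suc t) = relval \<mu> \<pi> t *
      (fst (\<pi> (\<mu> t)) * fst (\<mu> (Suc t)) / fst (\<mu> t)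
     + snd (\<pi> (\<mu> t)) * snd (\<mu> (Suc t)) / snd (\<mu> t))"

definition wealth_dist ::
  "((real \<times> real) \<Rightarrow> (real \<times> real)) measure \<Rightarrow> (nat \<Rightarrow> real \<times> real) \<Rightarrow> nat
     \<Rightarrow> ((real \<times> real) \<Rightarrow> (real \<times> real)) set \<Rightarrow> real" where
  "wealth_dist N \<mu> t B =
     (LINT \<pi>:B|N. relval \<mu> \<pi> t) / (LINT \<pi>|N. relval \<mu> \<pi> t)"

definition eln :: "real \<Rightarrow> ereal" where
  "eln x = (if x \<le> 0 then -\<infinity> else ereal (ln x))"

definition rate_function :: "'a topology \<Rightarrow> ('a \<Rightarrow> ereal) \<Rightarrow> bool" where
  "rate_function X I \<longleftrightarrow> (\<forall>x\<in>topspace X. I x \<ge> 0) \<and>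
     (\<forall>c. closedin X {x \<in> topspace X. I x \<le> c})"

definition LDP :: "'a topology \<Rightarrow> (nat \<Rightarrow> 'a set \<Rightarrow> real) \<Rightarrow> ('a \<Rightarrow> ereal) \<Rightarrow> bool" where
  "LDP X \<nu> I \<longleftrightarrow> rate_function X I \<and>
     (\<forall>F. closedin X F \<longrightarrow>
        limsup (\<lambda>t. ereal (1 / real t) * eln (\<nu> t F)) \<le> - (INF x\<in>F. I x)) \<and>
     (\<forall>G. openin X G \<longrightarrow>
        liminf (\<lambda>t. ereal (1 / real t) * eln (\<nu> t G)) \<ge> - (INF x\<in>G. I x))"

end

theory Submission
  imports Defs
begin

text \<open>
  The relative value of a portfolio is its own wealth divided by that of the market, and the
  market factor is the same for every portfolio, so it cancels in \<open>\<nu>\<^sub>t\<close>. Each step multiplies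
  the wealth of a portfolio by a factor in \<open>[1, 1 + \<delta>]\<close>, and the market weights never repeat, so
  a basic cylinder constraining finitely many coordinates \<open>K\<close> changes the wealth by a factor of at
  most \<open>(1 + \<delta>)\<^bsup>|K|\<^esup>\<close>. By independence of the coordinates under \<open>\<nu>\<^sub>0\<close>, every nonempty open
  set therefore keeps wealth share at least \<open>\<nu>\<^sub>0(C) (1 + \<delta>)\<^bsup>-|K|\<^esup> > 0\<close> for all \<open>t\<close>;
  since shares are at most 1, both LDP bounds hold with rate \<open>0\<close>.
\<close>

lemma limsup_scaled_eln_le_0:
  assumes "\<And>t. x t \<le> 1"
  shows "limsup (\<lambda>t. ereal (1 / real t) * eln (x t)) \<le> 0"
proof (rule Limsup_bounded[OF always_eventually, OF allI])
  fix t
  have "eln (x t) \<le> 0"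
    using assms[of t] by (auto simp: eln_def)
  then show "ereal (1 / real t) * eln (x t) \<le> 0"
    by (cases "eln (x t)") (auto simp: divide_nonpos_nonneg)
qed

lemma limsup_scaled_eln_zero: "limsup (\<lambda>t. ereal (1 / real t) * eln 0) = -\<infinity>"
proof -
  have "eventually (\<lambda>t. ereal (1 / real t) * eln 0 \<le> -\<infinity>) sequentially"
    by (rule eventually_sequentiallyI[of 1]) (simp add: eln_def)
  then have "limsup (\<lambda>t. ereal (1 / real t) * eln 0) \<le> -\<infinity>"
    by (rule Limsup_bounded)
  then show ?thesis
    by simp
qed

lemma liminf_scaled_eln_ge_0:
  assumes "0 < \<kappa>" "\<And>t. \<kappa> \<le> x t"
  shows "0 \<le> liminf (\<lambda>t. ereal (1 / real t) * eln (x t))"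
proof -
  have "liminf (\<lambda>t. ereal (ln \<kappa> / real t)) = ereal 0"
    by (rule lim_imp_Liminf[OF trivial_limit_sequentially]) (intro tendsto_intros)
  then have "0 = liminf (\<lambda>t. ereal (ln \<kappa> / real t))"
    by (simp add: zero_ereal_def)
  also have "\<dots> \<le> liminf (\<lambda>t. ereal (1 / real t) * eln (x t))"
  proof (rule Liminf_mono[OF eventually_sequentiallyI[of 1]])
    fix t :: nat assume "1 \<le> t"
    have "0 < x t"
      using assms(1) assms(2)[of t] by linarith
    then have "ln \<kappa> \<le> ln (x t)"
      using assms(1) assms(2)[of t] by simp
    with \<open>0 < x t\<close> \<open>1 \<le> t\<close> show "ereal (ln \<kappa> / real t) \<le> ereal (1 / real t) * eln (x t)"
      by (simp add: eln_def divide_right_mono)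
  qed
  finally show ?thesis .
qed

lemma LDP_zero_rateI:
  assumes le_1: "\<And>t F. \<nu> t F \<le> 1" and empty: "\<And>t. \<nu> t {} = 0"
    and open_lower: "\<And>G. openin X G \<Longrightarrow> G \<noteq> {} \<Longrightarrow> \<exists>\<kappa>>0. \<forall>t. \<kappa> \<le> \<nu> t G"
  shows "LDP X \<nu> (\<lambda>_. 0)"
  unfolding LDP_def
proof (intro conjI allI impI)
  show "rate_function X (\<lambda>_. 0)"
    unfolding rate_function_def
  proof (intro conjI allI ballI)
    show "closedin X {x \<in> topspace X. (0::ereal) \<le> c}" for c
      by (cases "0 \<le> c") auto
  qed simp
  show "limsup (\<lambda>t. ereal (1 / real t) * eln (\<nu> t F)) \<le> - (INF x\<in>F. 0)" for F
  proof (cases "F = {}")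
    case True
    then show ?thesis
      using limsup_scaled_eln_zero by (simp add: empty)
  next
    case False
    then show ?thesis
      using limsup_scaled_eln_le_0[OF le_1] by simp
  qed
  show "- (INF x\<in>G. 0) \<le> liminf (\<lambda>t. ereal (1 / real t) * eln (\<nu> t G))"
    if "openin X G" for G
  proof (cases "G = {}")
    case True
    then show ?thesis by (simp add: top_ereal_def)
  next
    case False
    then show ?thesis
      using open_lower[OF that] liminf_scaled_eln_ge_0 by auto
  qed
qed

lemma prod_le_power_card_mult:
  fixes f :: "nat \<Rightarrow> real" and m :: "nat \<Rightarrow> 'a"
  assumes "inj m" "finite K" "\<And>s. 1 \<le> f s" "\<And>s. f s \<le> c"
  shows "(\<Prod>s<t. f s) \<le> c ^ card K * (\<Prod>s | s < t \<and> m s \<notin> K. f s)"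
proof -
  let ?A = "{s. s < t \<and> m s \<in> K}" and ?B = "{s. s < t \<and> m s \<notin> K}"
  have f_nonneg: "0 \<le> f s" for s
    using assms(3)[of s] by linarith
  have "card ?A = card (m ` ?A)"
    using assms(1) by (simp add: card_image inj_on_subset)
  also have "\<dots> \<le> card K"
    using assms(2) by (intro card_mono) auto
  finally have "(\<Prod>s\<in>?A. f s) \<le> c ^ card K"
    using assms(3,4) f_nonneg order_trans[OF assms(3) assms(4)] by (intro prod_le_power) auto
  moreover have "{..<t} = ?A \<union> ?B"
    by auto
  then have "(\<Prod>s<t. f s) = (\<Prod>s\<in>?A. f s) * (\<Prod>s\<in>?B. f s)"
    by (simp add: prod.union_disjoint[symmetric] disjoint_iff)
  ultimately show ?thesis
    using f_nonneg by (simp add: mult_right_mono prod_nonneg)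
qed

lemma (in product_prob_space) indep_vars_components:
  assumes "I \<noteq> {}"
  shows "P.indep_vars M (\<lambda>i \<omega>. \<omega> i) I"
proof (subst P.indep_vars_iff_distr_eq_PiM'[OF assms measurable_component_singleton])
  have "distr (PiM I M) (PiM I M) (\<lambda>\<omega>. restrict \<omega> I) = distr (PiM I M) (PiM I M) (\<lambda>\<omega>. \<omega>)"
    by (rule distr_cong) (auto simp: space_PiM)
  also have "\<dots> = PiM I M"
    by (rule distr_id)
  also have "\<dots> = PiM I (\<lambda>i. distr (PiM I M) (M i) (\<lambda>\<omega>. \<omega> i))"
    by (rule PiM_cong) (simp_all add: PiM_component)
  finally show "distr (PiM I M) (PiM I M) (\<lambda>\<omega>. \<lambda>i\<in>I. \<omega> i) = PiM I (\<lambda>i. distr (PiM I M) (M i) (\<lambda>\<omega>. \<omega> i))"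
    by simp
qed

lemma (in product_prob_space) integral_indicator_prod_emb_mult:
  fixes g :: "('i \<Rightarrow> 'a) \<Rightarrow> real"
  assumes "I \<noteq> {}" "K \<subseteq> I" "X \<in> sets (PiM K M)"
    and g: "g \<in> borel_measurable (PiM (I - K) M)"
    and int: "integrable (PiM I M) (\<lambda>\<omega>. g (restrict \<omega> (I - K)))"
  shows "(\<integral>\<omega>. indicator (prod_emb I M K X) \<omega> * g (restrict \<omega> (I - K)) \<partial>PiM I M)
       = measure (PiM I M) (prod_emb I M K X) * (\<integral>\<omega>. g (restrict \<omega> (I - K)) \<partial>PiM I M)"
proof -
  let ?f = "\<lambda>\<omega>. indicator X (restrict \<omega> K) :: real"
  have indep: "P.indep_var borel ?f borel (\<lambda>\<omega>. g (restrict \<omega> (I - K)))"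
    using P.indep_var_compose[OF P.indep_var_restrict[OF indep_vars_components[OF assms(1)]]
        borel_measurable_indicator[OF assms(3)] g] assms(2)
    by (simp add: comp_def)
  have emb: "prod_emb I M K X \<in> sets (PiM I M)"
    using assms(2,3) by (rule measurable_prod_emb)
  have f_eq: "?f \<omega> = indicator (prod_emb I M K X) \<omega>" if "\<omega> \<in> space (PiM I M)" for \<omega>
    using that by (auto simp: prod_emb_def space_PiM indicator_def)
  have f_int: "integrable (PiM I M) ?f"
    using emb by (subst Bochner_Integration.integrable_cong[OF refl f_eq]) (auto simp: P.emeasure_eq_measure)
  have "(\<integral>\<omega>. indicator (prod_emb I M K X) \<omega> * g (restrict \<omega> (I - K)) \<partial>PiM I M)
      = (\<integral>\<omega>. ?f \<omega> * g (restrict \<omega> (I - K)) \<partial>PiM I M)"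
    by (rule Bochner_Integration.integral_cong) (simp_all add: f_eq)
  also have "\<dots> = (\<integral>\<omega>. ?f \<omega> \<partial>PiM I M) * (\<integral>\<omega>. g (restrict \<omega> (I - K)) \<partial>PiM I M)"
    by (rule P.indep_var_lebesgue_integral[OF indep f_int int])
  also have "(\<integral>\<omega>. ?f \<omega> \<partial>PiM I M) = measure (PiM I M) (prod_emb I M K X)"
    using emb by (simp add: Bochner_Integration.integral_cong[OF refl f_eq])
  finally show ?thesis .
qed

lemma space_unif_simplex [simp]: "space unif_simplex = simplex_closed"
  by (simp add: unif_simplex_def space_restrict_space)

lemma sets_unif_simplex: "sets unif_simplex = sets (restrict_space borel simplex_closed)"
  by (simp add: unif_simplex_def)

lemma measurable_simplex_param:
  "(\<lambda>x::real. (x, 1 - x)) \<in> restrict_space lborel {0..1} \<rightarrow>\<^sub>M restrict_space borel simplex_closed"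
  by (rule measurable_restrict_space3) (auto simp: simplex_closed_def)

lemma prob_space_unif_simplex: "prob_space unif_simplex"
  unfolding unif_simplex_def
proof (rule prob_space.prob_space_distr[OF _ measurable_simplex_param])
  show "prob_space (restrict_space lborel {0..1::real})"
    by (rule prob_spaceI) (simp add: emeasure_restrict_space space_restrict_space)
qed

lemma emeasure_restrict_unit_interval_open_pos:
  assumes "open U" "a \<in> U" "0 \<le> a" "a \<le> 1"
  shows "0 < emeasure (restrict_space lborel {0..1::real}) (U \<inter> {0..1})"
proof -
  obtain e where e: "0 < e" "ball a e \<subseteq> U"
    using assms(1,2) open_contains_ball by blast
  define d where "d = min (e / 2) 1"
  define lo hi where "lo = max 0 (a - d)" and "hi = min 1 (a + d)"
  have d: "0 < d" "d < e" "d \<le> 1"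
    using e by (auto simp: d_def)
  have interval: "{lo..hi} \<subseteq> U \<inter> {0..1}"
  proof
    fix y assume "y \<in> {lo..hi}"
    then have "y \<in> ball a e" "0 \<le> y" "y \<le> 1"
      using d by (auto simp: lo_def hi_def dist_real_def)
    then show "y \<in> U \<inter> {0..1}"
      using e(2) by auto
  qed
  have "lo < hi"
    using assms(3,4) d by (simp add: lo_def hi_def)
  then have "0 < emeasure (restrict_space lborel {0..1}) {lo..hi}"
    using interval by (subst emeasure_restrict_space) auto
  also have "\<dots> \<le> emeasure (restrict_space lborel {0..1}) (U \<inter> {0..1})"
    using interval assms(1) by (intro emeasure_mono) (auto simp: sets_restrict_space)
  finally show ?thesis .
qed

lemma emeasure_unif_simplex_pos:
  assumes "open V" and "simplex_closed \<inter> V \<noteq> {}"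
  shows "0 < emeasure unif_simplex (simplex_closed \<inter> V)"
proof -
  define f where "f = (\<lambda>x::real. (x, 1 - x))"
  obtain p where p: "p \<in> simplex_closed" "p \<in> V"
    using assms(2) by blast
  moreover have "f (fst p) = p"
    using p(1) by (auto simp: simplex_closed_def f_def prod_eq_iff)
  ultimately have "f (fst p) \<in> V" "0 \<le> fst p" "fst p \<le> 1"
    using p(1) by (auto simp: simplex_closed_def)
  moreover have "open (f -` V)"
    unfolding f_def by (intro open_vimage assms(1) continuous_intros)
  ultimately have "0 < emeasure (restrict_space lborel {0..1}) (f -` V \<inter> {0..1})"
    by (intro emeasure_restrict_unit_interval_open_pos) auto
  also have "f -` V \<inter> {0..1} = f -` (simplex_closed \<inter> V) \<inter> space (restrict_space lborel {0..1})"
    by (auto simp: f_def simplex_closed_def space_restrict_space)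
  also have "emeasure (restrict_space lborel {0..1}) \<dots> = emeasure unif_simplex (simplex_closed \<inter> V)"
    unfolding unif_simplex_def f_def using assms(1)
    by (subst emeasure_distr[OF measurable_simplex_param]) (auto simp: sets_restrict_space)
  finally show ?thesis .
qed

interpretation nu0_product: product_prob_space "\<lambda>_. unif_simplex" E_rat
  by (simp add: product_prob_space_def product_sigma_finite_def product_prob_space_axioms_def
      prob_space_unif_simplex prob_space_imp_sigma_finite)

lemma prob_space_nu0: "prob_space nu0"
  unfolding nu0_def by (rule nu0_product.P.prob_space_axioms)

lemma space_nu0: "space nu0 = (\<Pi>\<^sub>E i\<in>E_rat. simplex_closed)"
  by (simp add: nu0_def space_PiM)

lemma E_rat_nonempty: "E_rat \<noteq> {}"
proof -
  have "(1/2, 1/2) \<in> E_rat"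
    by (simp add: E_rat_def simplex_open_def)
  then show ?thesis by blast
qed

lemma countable_E_rat: "countable E_rat"
  by (rule countable_subset[of _ "\<rat> \<times> \<rat>"]) (auto simp: E_rat_def countable_rat)

lemma measurable_component_unif_simplex:
  assumes "i \<in> J"
  shows "(\<lambda>\<omega>. \<omega> i) \<in> borel_measurable (PiM J (\<lambda>_. unif_simplex))"
proof -
  have "(\<lambda>\<omega>. \<omega> i) \<in> PiM J (\<lambda>_. unif_simplex) \<rightarrow>\<^sub>M restrict_space borel simplex_closed"
    using measurable_component_singleton[OF assms] measurable_cong_sets[OF refl sets_unif_simplex] by blast
  then show ?thesis
    by (simp add: measurable_restrict_space2_iff)
qed

definition simplex_cylinder ::
  "(real \<times> real) set \<Rightarrow> (real \<times> real \<Rightarrow> (real \<times> real) set) \<Rightarrow> (real \<times> real \<Rightarrow> real \<times> real) set" where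
  "simplex_cylinder K V = prod_emb E_rat (\<lambda>_. unif_simplex) K (\<Pi>\<^sub>E i\<in>K. simplex_closed \<inter> V i)"

lemma mem_simplex_cylinder:
  "\<pi> \<in> simplex_cylinder K V \<longleftrightarrow> \<pi> \<in> space nu0 \<and> (\<forall>i\<in>K. \<pi> i \<in> simplex_closed \<inter> V i)"
  by (simp add: simplex_cylinder_def prod_emb_def space_nu0 Pi_iff conj_commute)

lemma simplex_cylinder_restrict: "simplex_cylinder K (restrict V K) = simplex_cylinder K V"
  by (auto simp: mem_simplex_cylinder)

lemma sets_simplex_cylinder:
  assumes "finite K" "K \<subseteq> E_rat" "\<And>i. i \<in> K \<Longrightarrow> open (V i)"
  shows "simplex_cylinder K V \<in> sets nu0"
  unfolding simplex_cylinder_def nu0_def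
  using assms by (intro sets_PiM_I) (auto simp: sets_unif_simplex sets_restrict_space)

lemma measure_simplex_cylinder_pos:
  assumes "finite K" "K \<subseteq> E_rat" "\<And>i. i \<in> K \<Longrightarrow> open (V i)" "\<pi> \<in> simplex_cylinder K V"
  shows "0 < measure nu0 (simplex_cylinder K V)"
proof -
  have "measure nu0 (simplex_cylinder K V) = (\<Prod>i\<in>K. measure unif_simplex (simplex_closed \<inter> V i))"
    unfolding simplex_cylinder_def nu0_def using assms(1-3)
    by (intro nu0_product.measure_PiM_emb) (auto simp: sets_unif_simplex sets_restrict_space)
  also have "\<dots> > 0"
  proof (rule prod_pos)
    fix i assume "i \<in> K"
    then have "0 < emeasure unif_simplex (simplex_closed \<inter> V i)"
      using assms(3,4) by (intro emeasure_unif_simplex_pos) (auto simp: mem_simplex_cylinder)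
    then show "0 < measure unif_simplex (simplex_closed \<inter> V i)"
      by (simp add: nu0_product.M.emeasure_eq_measure)
  qed
  finally show ?thesis .
qed

lemma simplex_cylinder_subset_PiE:
  assumes "\<And>i. i \<in> E_rat \<Longrightarrow> i \<notin> K \<Longrightarrow> U i = simplex_closed"
    and "\<And>i. i \<in> K \<Longrightarrow> simplex_closed \<inter> V i \<subseteq> U i"
  shows "simplex_cylinder K V \<subseteq> (\<Pi>\<^sub>E i\<in>E_rat. U i)"
proof
  fix \<pi> assume "\<pi> \<in> simplex_cylinder K V"
  then have \<pi>: "\<pi> \<in> (\<Pi>\<^sub>E i\<in>E_rat. simplex_closed)" "\<forall>i\<in>K. \<pi> i \<in> simplex_closed \<inter> V i"
    by (simp_all add: mem_simplex_cylinder space_nu0)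
  have "\<pi> i \<in> U i" if "i \<in> E_rat" for i
  proof (cases "i \<in> K")
    case True
    then show ?thesis using \<pi>(2) assms(2) by blast
  next
    case False
    then show ?thesis using \<pi>(1) that assms(1) by auto
  qed
  then show "\<pi> \<in> (\<Pi>\<^sub>E i\<in>E_rat. U i)"
    using \<pi>(1) by (simp add: PiE_iff)
qed

lemma openin_Theta_top_contains_cylinder:
  assumes "topological_basis B" "openin Theta_top G" "x \<in> G"
  obtains K V where "finite K" "K \<subseteq> E_rat" "\<And>i. i \<in> K \<Longrightarrow> V i \<in> B"
    "x \<in> simplex_cylinder K V" "simplex_cylinder K V \<subseteq> G"
proof -
  obtain U where U: "finite {i \<in> E_rat. U i \<noteq> simplex_closed}"
      "\<And>i. i \<in> E_rat \<Longrightarrow> openin (subtopology euclidean simplex_closed) (U i)"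
      "x \<in> (\<Pi>\<^sub>E i\<in>E_rat. U i)" "(\<Pi>\<^sub>E i\<in>E_rat. U i) \<subseteq> G"
    using assms(2,3) unfolding Theta_top_def openin_product_topology_alt by auto
  define K where "K = {i \<in> E_rat. U i \<noteq> simplex_closed}"
  have "\<exists>b. b \<in> B \<and> x i \<in> b \<and> simplex_closed \<inter> b \<subseteq> U i" if "i \<in> K" for i
  proof -
    have "openin (top_of_set simplex_closed) (U i)"
      using U(2) \<open>i \<in> K\<close> by (simp add: K_def)
    then obtain W where W: "open W" "U i = simplex_closed \<inter> W"
      unfolding openin_open by blast
    moreover have "x i \<in> W"
      using U(3) W(2) \<open>i \<in> K\<close> by (auto simp: K_def)
    ultimately obtain b where "b \<in> B" "x i \<in> b" "b \<subseteq> W"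
      using topological_basisE[OF assms(1)] by blast
    with W(2) show ?thesis by blast
  qed
  then have "\<forall>i\<in>K. \<exists>b. b \<in> B \<and> x i \<in> b \<and> simplex_closed \<inter> b \<subseteq> U i"
    by blast
  from bchoice[OF this] obtain V where V: "\<forall>i\<in>K. V i \<in> B \<and> x i \<in> V i \<and> simplex_closed \<inter> V i \<subseteq> U i"
    by blast
  have "(\<Pi>\<^sub>E i\<in>E_rat. U i) \<subseteq> space nu0"
    unfolding space_nu0 using U(2) by (intro PiE_mono openin_imp_subset)
  then have "x \<in> space nu0"
    using U(3) by blast
  then have "x \<in> simplex_cylinder K V"
    using V by (auto simp: mem_simplex_cylinder space_nu0 K_def)
  moreover have "simplex_cylinder K V \<subseteq> G"
    using simplex_cylinder_subset_PiE[of K U V] V U(4) by (auto simp: K_def)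
  moreover have "finite K" "K \<subseteq> E_rat"
    using U(1) by (simp_all add: K_def)
  ultimately show ?thesis
    using that[of K V] V by blast
qed

lemma sets_nu0_openin:
  assumes "openin Theta_top G"
  shows "G \<in> sets nu0"
proof -
  obtain B :: "(real \<times> real) set set" where B: "countable B" "topological_basis B"
    using ex_countable_basis by blast
  define \<C> where "\<C> = case_prod simplex_cylinder ` (SIGMA K:{K. finite K \<and> K \<subseteq> E_rat}. \<Pi>\<^sub>E i\<in>K. B)"
  have "countable \<C>"
    unfolding \<C>_def using B(1) countable_E_rat
    by (intro countable_image countable_SIGMA countable_Collect_finite_subset countable_PiE) auto
  moreover have "\<C> \<subseteq> sets nu0"
    unfolding \<C>_def using topological_basis_open[OF B(2)]
    by (auto intro!: sets_simplex_cylinder simp: PiE_iff)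
  moreover have "G = \<Union>{C \<in> \<C>. C \<subseteq> G}"
  proof (intro equalityI subsetI)
    fix x assume "x \<in> G"
    then obtain K V where "finite K" "K \<subseteq> E_rat" "\<And>i. i \<in> K \<Longrightarrow> V i \<in> B"
        "x \<in> simplex_cylinder K V" "simplex_cylinder K V \<subseteq> G"
      using openin_Theta_top_contains_cylinder[OF B(2) assms] by blast
    then have "simplex_cylinder K V \<in> {C \<in> \<C>. C \<subseteq> G}"
      unfolding \<C>_def
      by (auto intro!: image_eqI[where x="(K, restrict V K)"] simp: simplex_cylinder_restrict)
    with \<open>x \<in> simplex_cylinder K V\<close> show "x \<in> \<Union>{C \<in> \<C>. C \<subseteq> G}"
      by blast
  qed auto
  moreover have "countable {C \<in> \<C>. C \<subseteq> G}"
    using \<open>countable \<C>\<close> by (rule countable_subset[rotated]) blast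
  ultimately show ?thesis
    by (metis (no_types, lifting) sets.countable_Union mem_Collect_eq subset_iff)
qed

lemma wealth_dist_empty: "wealth_dist N \<mu> t {} = 0"
  by (simp add: wealth_dist_def set_lebesgue_integral_def)

text \<open>
  \<open>mkt \<delta>\<close> gives the market weights of two stocks whose capitalisations grow by the factors \<open>1\<close>
  and \<open>1 + \<delta>\<close> in every period, so \<open>gross_return \<delta> p\<close> is the one-period growth of wealth held
  in proportions \<open>p\<close>, and the relative value is \<open>wealth\<close> divided by the growth of the market.
\<close>

definition gross_return :: "real \<Rightarrow> real \<times> real \<Rightarrow> real" where
  "gross_return \<delta> p = fst p + (1 + \<delta>) * snd p"

definition wealth :: "real \<Rightarrow> (real \<times> real \<Rightarrow> real \<times> real) \<Rightarrow> nat \<Rightarrow> real" where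
  "wealth \<delta> \<pi> t = (\<Prod>s<t. gross_return \<delta> (\<pi> (mkt \<delta> s)))"

definition wealth_outside ::
  "real \<Rightarrow> (real \<times> real) set \<Rightarrow> (real \<times> real \<Rightarrow> real \<times> real) \<Rightarrow> nat \<Rightarrow> real" where
  "wealth_outside \<delta> K \<pi> t = (\<Prod>s | s < t \<and> mkt \<delta> s \<notin> K. gross_return \<delta> (\<pi> (mkt \<delta> s)))"

lemma gross_return_bounds:
  assumes "0 \<le> \<delta>" "p \<in> simplex_closed"
  shows "1 \<le> gross_return \<delta> p" "gross_return \<delta> p \<le> 1 + \<delta>"
proof -
  have "0 \<le> \<delta> * snd p" "\<delta> * snd p \<le> \<delta>"
    using assms by (auto simp: simplex_closed_def mult_left_le)
  then show "1 \<le> gross_return \<delta> p" "gross_return \<delta> p \<le> 1 + \<delta>"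
    using assms(2) by (auto simp: gross_return_def simplex_closed_def algebra_simps)
qed

lemma wealth_bounds:
  assumes "0 \<le> \<delta>" "\<And>s. \<pi> (mkt \<delta> s) \<in> simplex_closed"
  shows "1 \<le> wealth \<delta> \<pi> t" "wealth \<delta> \<pi> t \<le> (1 + \<delta>) ^ t"
  unfolding wealth_def using gross_return_bounds[OF assms(1) assms(2)] assms(1)
  by (auto intro!: prod_ge_1 prod_le_power order_trans[OF zero_le_one])

context
  fixes \<delta> :: real
  assumes delta_pos: "0 < \<delta>"
begin

lemma mkt_in_simplex_open: "mkt \<delta> t \<in> simplex_open"
proof (induction t)
  case 0
  show ?case by (simp add: simplex_open_def)
next
  case (Suc t)
  obtain a b where ab: "mkt \<delta> t = (a, b)" "0 < a" "0 < b" "a + b = 1"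
    using Suc by (cases "mkt \<delta> t") (auto simp: simplex_open_def)
  have "0 < 1 + \<delta> * b"
    using ab delta_pos by (simp add: add_pos_pos)
  moreover have "a / (1 + \<delta> * b) + (1 + \<delta>) * b / (1 + \<delta> * b) = (a + b + \<delta> * b) / (1 + \<delta> * b)"
    by (simp add: add_divide_distrib algebra_simps)
  ultimately have "a / (1 + \<delta> * b) + (1 + \<delta>) * b / (1 + \<delta> * b) = 1"
    using ab(4) by simp
  with ab delta_pos show ?case
    by (simp add: simplex_open_def add_pos_pos)
qed

lemma strict_mono_snd_mkt: "strict_mono (\<lambda>t. snd (mkt \<delta> t))"
proof (rule strict_monoI_Suc)
  fix t
  obtain a b where ab: "mkt \<delta> t = (a, b)" "0 < b" "b < 1"
    using mkt_in_simplex_open[of t] by (cases "mkt \<delta> t") (auto simp: simplex_open_def)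
  then have "b * (1 + \<delta> * b) < (1 + \<delta>) * b"
    using delta_pos by (simp add: algebra_simps)
  then show "snd (mkt \<delta> t) < snd (mkt \<delta> (Suc t))"
    using ab delta_pos by (simp add: pos_less_divide_eq add_pos_pos)
qed

lemma inj_mkt: "inj (mkt \<delta>)"
  using strict_mono_snd_mkt by (metis injI strict_mono_eq)

lemma mkt_in_E_rat:
  assumes "\<delta> \<in> \<rat>"
  shows "mkt \<delta> t \<in> E_rat"
proof -
  have "fst (mkt \<delta> t) \<in> \<rat> \<and> snd (mkt \<delta> t) \<in> \<rat>"
    by (induction t) (simp_all add: Let_def assms)
  then show ?thesis
    using mkt_in_simplex_open by (simp add: E_rat_def)
qed

lemma relval_mkt:
  "relval (mkt \<delta>) \<pi> t = wealth \<delta> \<pi> t / (\<Prod>s<t. 1 + \<delta> * snd (mkt \<delta> s))"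
proof (induction t)
  case 0
  show ?case by (simp add: wealth_def)
next
  case (Suc t)
  obtain a b where ab: "mkt \<delta> t = (a, b)" "0 < a" "0 < b"
    using mkt_in_simplex_open[of t] by (cases "mkt \<delta> t") (auto simp: simplex_open_def)
  have "fst (\<pi> (a, b)) * (a / (1 + \<delta> * b)) / a + snd (\<pi> (a, b)) * ((1 + \<delta>) * b / (1 + \<delta> * b)) / b
      = gross_return \<delta> (\<pi> (a, b)) / (1 + \<delta> * b)"
    using ab by (simp add: gross_return_def add_divide_distrib)
  with Suc ab show ?case
    by (simp add: wealth_def)
qed

lemma wealth_dist_mkt:
  "wealth_dist N (mkt \<delta>) t B = (LINT \<pi>:B|N. wealth \<delta> \<pi> t) / (LINT \<pi>|N. wealth \<delta> \<pi> t)"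
proof -
  define D where "D = (\<Prod>s<t. 1 + \<delta> * snd (mkt \<delta> s))"
  have "0 < D"
    unfolding D_def using mkt_in_simplex_open delta_pos
    by (intro prod_pos) (auto simp: simplex_open_def add_pos_pos)
  then show ?thesis
    unfolding wealth_dist_def relval_mkt D_def[symmetric] set_integral_divide_zero integral_divide_zero
    by simp
qed

end

context
  fixes \<delta> :: real
  assumes delta_pos: "0 < \<delta>" and delta_rat: "\<delta> \<in> \<rat>"
begin

lemma wealth_bounds_nu0:
  assumes "\<pi> \<in> space nu0"
  shows "1 \<le> wealth \<delta> \<pi> t" "wealth \<delta> \<pi> t \<le> (1 + \<delta>) ^ t"
  using assms mkt_in_E_rat[OF delta_pos delta_rat] delta_pos
  by (auto simp: space_nu0 intro!: wealth_bounds)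

lemma borel_measurable_prod_gross_return:
  assumes "\<And>s. s \<in> S \<Longrightarrow> mkt \<delta> s \<in> J"
  shows "(\<lambda>\<rho>. \<Prod>s\<in>S. gross_return \<delta> (\<rho> (mkt \<delta> s))) \<in> borel_measurable (PiM J (\<lambda>_. unif_simplex))"
proof (rule borel_measurable_prod)
  have "gross_return \<delta> \<in> borel_measurable borel"
    unfolding gross_return_def by (intro borel_measurable_continuous_onI continuous_intros)
  then show "(\<lambda>\<rho>. gross_return \<delta> (\<rho> (mkt \<delta> s))) \<in> borel_measurable (PiM J (\<lambda>_. unif_simplex))"
    if "s \<in> S" for s
    using measurable_compose[OF measurable_component_unif_simplex[OF assms[OF that]]] by blast
qed

lemma integrable_wealth: "integrable nu0 (\<lambda>\<pi>. wealth \<delta> \<pi> t)"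
proof (rule finite_measure.integrable_const_bound)
  show "finite_measure nu0"
    using prob_space_nu0 by (simp add: prob_space_def)
  show "AE \<pi> in nu0. norm (wealth \<delta> \<pi> t) \<le> (1 + \<delta>) ^ t"
    using wealth_bounds_nu0 by (intro AE_I2) (simp add: order_trans[OF zero_le_one])
  show "(\<lambda>\<pi>. wealth \<delta> \<pi> t) \<in> borel_measurable nu0"
    unfolding wealth_def nu0_def
    using mkt_in_E_rat[OF delta_pos delta_rat] by (intro borel_measurable_prod_gross_return)
qed

lemma integral_wealth_pos: "0 < (LINT \<pi>|nu0. wealth \<delta> \<pi> t)"
proof -
  interpret prob_space nu0
    by (rule prob_space_nu0)
  have "1 \<le> (LINT \<pi>|nu0. wealth \<delta> \<pi> t)"
    using integral_mono[OF _ integrable_wealth, of "\<lambda>_. 1"] wealth_bounds_nu0 by (simp add: prob_space)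
  then show ?thesis
    by linarith
qed

lemma wealth_dist_le_1: "wealth_dist nu0 (mkt \<delta>) t B \<le> 1"
proof -
  have "(LINT \<pi>:B|nu0. wealth \<delta> \<pi> t) \<le> (LINT \<pi>|nu0. wealth \<delta> \<pi> t)"
    unfolding set_lebesgue_integral_def using integrable_wealth wealth_bounds_nu0
    by (intro integral_mono') (auto simp: indicator_def order_trans[OF zero_le_one])
  then show ?thesis
    using integral_wealth_pos by (simp add: wealth_dist_mkt[OF delta_pos] divide_le_eq)
qed

lemma wealth_outside_restrict:
  "wealth_outside \<delta> K (restrict \<pi> (E_rat - K)) t = wealth_outside \<delta> K \<pi> t"
  using mkt_in_E_rat[OF delta_pos delta_rat] by (auto simp: wealth_outside_def intro!: prod.cong)

lemma borel_measurable_wealth_outside: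
  "(\<lambda>\<rho>. wealth_outside \<delta> K \<rho> t) \<in> borel_measurable (PiM (E_rat - K) (\<lambda>_. unif_simplex))"
  unfolding wealth_outside_def using mkt_in_E_rat[OF delta_pos delta_rat]
  by (intro borel_measurable_prod_gross_return) auto

lemma wealth_outside_bounds:
  assumes "finite K" "\<pi> \<in> space nu0"
  shows "0 \<le> wealth_outside \<delta> K \<pi> t" "wealth_outside \<delta> K \<pi> t \<le> wealth \<delta> \<pi> t"
    "wealth \<delta> \<pi> t \<le> (1 + \<delta>) ^ card K * wealth_outside \<delta> K \<pi> t"
proof -
  have bounds: "1 \<le> gross_return \<delta> (\<pi> (mkt \<delta> s))" "gross_return \<delta> (\<pi> (mkt \<delta> s)) \<le> 1 + \<delta>" for s
    using gross_return_bounds[of \<delta> "\<pi> (mkt \<delta> s)"] assms(2) mkt_in_E_rat[OF delta_pos delta_rat] delta_pos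
    by (auto simp: space_nu0)
  show "0 \<le> wealth_outside \<delta> K \<pi> t"
    unfolding wealth_outside_def using bounds by (auto intro: prod_nonneg order_trans[OF zero_le_one])
  show "wealth_outside \<delta> K \<pi> t \<le> wealth \<delta> \<pi> t"
    unfolding wealth_outside_def wealth_def using bounds
    by (intro prod_mono2) (auto intro: order_trans[OF zero_le_one])
  show "wealth \<delta> \<pi> t \<le> (1 + \<delta>) ^ card K * wealth_outside \<delta> K \<pi> t"
    unfolding wealth_outside_def wealth_def using bounds
    by (intro prod_le_power_card_mult[OF inj_mkt[OF delta_pos] assms(1)])
qed

lemma integrable_wealth_outside:
  assumes "finite K"
  shows "integrable nu0 (\<lambda>\<pi>. wealth_outside \<delta> K \<pi> t)"
proof (rule Bochner_Integration.integrable_bound[OF integrable_wealth])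
  show "(\<lambda>\<pi>. wealth_outside \<delta> K \<pi> t) \<in> borel_measurable nu0"
    using measurable_compose[OF measurable_restrict_subset borel_measurable_wealth_outside]
    by (simp add: nu0_def wealth_outside_restrict)
  show "AE \<pi> in nu0. norm (wealth_outside \<delta> K \<pi> t) \<le> norm (wealth \<delta> \<pi> t)"
    using wealth_outside_bounds[OF assms] by (intro AE_I2) (auto intro: order_trans[OF _ abs_ge_self])
qed

lemma set_integral_wealth_simplex_cylinder:
  assumes K: "finite K" "K \<subseteq> E_rat" and V: "\<And>i. i \<in> K \<Longrightarrow> open (V i)"
  shows "measure nu0 (simplex_cylinder K V) * (LINT \<pi>|nu0. wealth \<delta> \<pi> t) / (1 + \<delta>) ^ card K
    \<le> (LINT \<pi>:simplex_cylinder K V|nu0. wealth \<delta> \<pi> t)"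
proof -
  let ?C = "simplex_cylinder K V" and ?c = "(1 + \<delta>) ^ card K"
  let ?Q = "\<lambda>\<pi>. wealth_outside \<delta> K \<pi> t"
  have X_sets: "(\<Pi>\<^sub>E i\<in>K. simplex_closed \<inter> V i) \<in> sets (PiM K (\<lambda>_. unif_simplex))"
    using K(1) V by (intro sets_PiM_I_finite) (auto simp: sets_unif_simplex sets_restrict_space)
  have "measure nu0 ?C * (LINT \<pi>|nu0. wealth \<delta> \<pi> t) / ?c
      = measure nu0 ?C * (LINT \<pi>|nu0. wealth \<delta> \<pi> t / ?c)"
    by simp
  also have "\<dots> \<le> measure nu0 ?C * (LINT \<pi>|nu0. ?Q \<pi>)"
    using integrable_wealth integrable_wealth_outside[OF K(1)] wealth_outside_bounds(3)[OF K(1)] delta_pos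
    by (intro mult_left_mono integral_mono) (auto simp: divide_le_eq mult.commute)
  also have "\<dots> = (LINT \<pi>|nu0. indicator ?C \<pi> * ?Q \<pi>)"
    using nu0_product.integral_indicator_prod_emb_mult[OF E_rat_nonempty K(2) X_sets
        borel_measurable_wealth_outside] integrable_wealth_outside[OF K(1)]
    by (simp add: simplex_cylinder_def nu0_def wealth_outside_restrict)
  also have "\<dots> \<le> (LINT \<pi>:?C|nu0. wealth \<delta> \<pi> t)"
    unfolding set_lebesgue_integral_def
    using integrable_mult_indicator[OF sets_simplex_cylinder[OF K V] integrable_wealth]
      wealth_outside_bounds[OF K(1)] wealth_bounds_nu0
    by (intro integral_mono') (auto simp: indicator_def intro: order_trans[OF zero_le_one])
  finally show ?thesis .
qed

lemma wealth_dist_openin_lower_bound: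
  assumes "openin Theta_top G" "G \<noteq> {}"
  obtains \<kappa> where "0 < \<kappa>" "\<And>t. \<kappa> \<le> wealth_dist nu0 (mkt \<delta>) t G"
proof -
  obtain x where "x \<in> G"
    using assms(2) by blast
  obtain B :: "(real \<times> real) set set" where B: "topological_basis B"
    using ex_countable_basis by blast
  obtain K V where K: "finite K" "K \<subseteq> E_rat" and V: "\<And>i. i \<in> K \<Longrightarrow> V i \<in> B"
    and C: "x \<in> simplex_cylinder K V" "simplex_cylinder K V \<subseteq> G"
    using openin_Theta_top_contains_cylinder[OF B assms(1) \<open>x \<in> G\<close>] by blast
  have V_open: "\<And>i. i \<in> K \<Longrightarrow> open (V i)"
    using V topological_basis_open[OF B] by blast
  define \<kappa> where "\<kappa> = measure nu0 (simplex_cylinder K V) / (1 + \<delta>) ^ card K"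
  have "0 < \<kappa>"
    unfolding \<kappa>_def using measure_simplex_cylinder_pos[OF K V_open C(1)] delta_pos by simp
  moreover have "\<kappa> \<le> wealth_dist nu0 (mkt \<delta>) t G" for t
  proof -
    have "\<kappa> * (LINT \<pi>|nu0. wealth \<delta> \<pi> t) \<le> (LINT \<pi>:simplex_cylinder K V|nu0. wealth \<delta> \<pi> t)"
      unfolding \<kappa>_def using set_integral_wealth_simplex_cylinder[OF K V_open] by simp
    also have "\<dots> \<le> (LINT \<pi>:G|nu0. wealth \<delta> \<pi> t)"
      unfolding set_lebesgue_integral_def
      using integrable_mult_indicator[OF sets_nu0_openin[OF assms(1)] integrable_wealth] C(2)
        wealth_bounds_nu0
      by (intro integral_mono') (auto simp: indicator_def intro: order_trans[OF zero_le_one])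
    finally show ?thesis
      using integral_wealth_pos by (simp add: wealth_dist_mkt[OF delta_pos] le_divide_eq)
  qed
  ultimately show ?thesis
    using that by blast
qed

end

theorem proposition3p8:
  fixes \<delta> :: real
  assumes "\<delta> > 0" and "\<delta> \<in> \<rat>"
  shows "LDP Theta_top (wealth_dist nu0 (mkt \<delta>)) (\<lambda>_. 0)"
proof (rule LDP_zero_rateI)
  show "wealth_dist nu0 (mkt \<delta>) t F \<le> 1" for t F
    using assms by (rule wealth_dist_le_1)
  show "wealth_dist nu0 (mkt \<delta>) t {} = 0" for t
    by (rule wealth_dist_empty)
  show "\<exists>\<kappa>>0. \<forall>t. \<kappa> \<le> wealth_dist nu0 (mkt \<delta>) t G"
    if "openin Theta_top G" "G \<noteq> {}" for G
    using wealth_dist_openin_lower_bound[OF assms that] by metis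
qed

end
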